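(* For every $D$-sequence $\mathbf{b}$, the topology $\tau_{\mathbf{b}}$ is strictly finer than $\lambda_{\mathbf{b}}$; in particular the identity $(\mathbb{Z},\tau_{\mathbf{b}})\to(\mathbb{Z},\lambda_{\mathbf{b}})$ is a continuous isomorphism which is not a homeomorphism.
   Context: $\mathbb{T}=\mathbb{R}/\mathbb{Z}$; $\mathbb{T}_m=[-\frac{1}{4m},\frac{1}{4m}]+\mathbb{Z}$. A $D$-sequence is a sequence $\mathbf{b}=(b_n)_{n\in\mathbb{N}_0}$ of natural numbers with $b_0=1$, $b_n\mid b_{n+1}$, $b_n\neq b_{n+1}$. $\lambda_{\mathbf{b}}$ is the group topology on $\mathbb{Z}$ with neighborhood basis $\{b_n\mathbb{Z}\}_{n\in\mathbb{N}_0}$ at $0$. $\tau_{\mathbf{b}}$ is the group topology on $\mathbb{Z}$ with neighborhood basis at $0$ given by $V_{\mathbf{b},m}=\{k\in\mathbb{Z}: \frac{k}{b_n}+\mathbb{Z}\in\mathbb{T}_m \text{ for all } n\in\mathbb{N}\}$, $m\in\mathbb{N}$. *)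

theory Defs
  imports "HOL-Analysis.Analysis"
begin

definition D_sequence :: "(nat \<Rightarrow> nat) \<Rightarrow> bool" where
  "D_sequence b \<longleftrightarrow> b 0 = 1 \<and> (\<forall>n. 0 < b n) \<and> (\<forall>n. b n dvd b (Suc n) \<and> b n \<noteq> b (Suc n))"

text \<open>T_m = [-1/(4m), 1/(4m)] + Z, as a predicate on real representatives.\<close>
definition in_Tm :: "nat \<Rightarrow> real \<Rightarrow> bool" where
  "in_Tm m x \<longleftrightarrow> (\<exists>z::int. \<bar>x - of_int z\<bar> \<le> 1 / (4 * real m))"

definition V_b :: "(nat \<Rightarrow> nat) \<Rightarrow> nat \<Rightarrow> int set" where
  "V_b b m = {k::int. \<forall>n. in_Tm m (real_of_int k / real (b n))}"

definition lambda_top :: "(nat \<Rightarrow> nat) \<Rightarrow> int topology" where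
  "lambda_top b = topology (\<lambda>U. \<forall>x\<in>U. \<exists>n. {x + int (b n) * k | k. True} \<subseteq> U)"

definition tau_top :: "(nat \<Rightarrow> nat) \<Rightarrow> int topology" where
  "tau_top b = topology (\<lambda>U. \<forall>x\<in>U. \<exists>m\<ge>1. (\<lambda>k. x + k) ` V_b b m \<subseteq> U)"

end

theory Submission
  imports Defs
begin

(* Both lambda_b and tau_b are "translation topologies": U is open iff every
   x in U has a basic neighbourhood x + N_i inside U, for a downward directed family N_i
   of sets containing 0.  For lambda_b the family is b_n Z, for tau_b it is V_{b,m}.

   tau_b is finer: an integer k in V_{b,b_n} satisfies |k/b_n - z| <= 1/(4 b_n) for some
   integer z, i.e. |k - z b_n| <= 1/4, so k is a multiple of b_n; hence V_{b,b_n} lies in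
   b_n Z.  It is strictly finer: V_{b,1} contains a tau_b-open set around 0 (since
   V_{b,2m} + V_{b,2m} is contained in V_{b,m}), but no coset b_n Z, because writing
   b_{n+1} = b_n q with q >= 2 the element b_n (q div 2) has b_n (q div 2)/b_{n+1} =
   (q div 2)/q, which lies in [1/3, 1/2] and so is not within 1/4 of an integer.
   The identity is then continuous from tau_b to lambda_b, and it is not a homeomorphism
   because the two topologies differ. *)

lemma istopology_translation:
  fixes N :: "'i \<Rightarrow> 'a::plus set"
  assumes directed: "\<And>i j. i \<in> I \<Longrightarrow> j \<in> I \<Longrightarrow> \<exists>k\<in>I. N k \<subseteq> N i \<inter> N j"
  shows "istopology (\<lambda>U. \<forall>x\<in>U. \<exists>i\<in>I. (+) x ` N i \<subseteq> U)"
  unfolding istopology_def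
proof (intro conjI allI impI)
  fix S T :: "'a set"
  assume S: "\<forall>x\<in>S. \<exists>i\<in>I. (+) x ` N i \<subseteq> S" and T: "\<forall>x\<in>T. \<exists>i\<in>I. (+) x ` N i \<subseteq> T"
  show "\<forall>x\<in>S \<inter> T. \<exists>i\<in>I. (+) x ` N i \<subseteq> S \<inter> T"
  proof
    fix x assume "x \<in> S \<inter> T"
    then obtain i j where "i \<in> I" "(+) x ` N i \<subseteq> S" "j \<in> I" "(+) x ` N j \<subseteq> T"
      using S T by blast
    moreover obtain k where "k \<in> I" "N k \<subseteq> N i \<inter> N j"
      using directed \<open>i \<in> I\<close> \<open>j \<in> I\<close> by blast
    ultimately show "\<exists>k\<in>I. (+) x ` N k \<subseteq> S \<inter> T" by blast
  qed
next
  fix K :: "'a set set"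
  assume "\<forall>U\<in>K. \<forall>x\<in>U. \<exists>i\<in>I. (+) x ` N i \<subseteq> U"
  then show "\<forall>x\<in>\<Union>K. \<exists>i\<in>I. (+) x ` N i \<subseteq> \<Union>K"
    by (meson Union_upper subset_trans UnionE)
qed

lemma openin_translation_topology:
  fixes N :: "'i \<Rightarrow> 'a::plus set"
  assumes "\<And>i j. i \<in> I \<Longrightarrow> j \<in> I \<Longrightarrow> \<exists>k\<in>I. N k \<subseteq> N i \<inter> N j"
  shows "openin (topology (\<lambda>U. \<forall>x\<in>U. \<exists>i\<in>I. (+) x ` N i \<subseteq> U)) U
           \<longleftrightarrow> (\<forall>x\<in>U. \<exists>i\<in>I. (+) x ` N i \<subseteq> U)"
  using istopology_translation[OF assms] by simp

lemma topspace_translation_topology: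
  fixes N :: "'i \<Rightarrow> 'a::plus set"
  assumes "\<And>i j. i \<in> I \<Longrightarrow> j \<in> I \<Longrightarrow> \<exists>k\<in>I. N k \<subseteq> N i \<inter> N j" and "I \<noteq> {}"
  shows "topspace (topology (\<lambda>U. \<forall>x\<in>U. \<exists>i\<in>I. (+) x ` N i \<subseteq> U)) = UNIV"
proof -
  have "openin (topology (\<lambda>U. \<forall>x\<in>U. \<exists>i\<in>I. (+) x ` N i \<subseteq> U)) UNIV"
    using openin_translation_topology[OF assms(1), of UNIV] assms(2) by blast
  then show ?thesis by (simp add: openin_subset subset_antisym)
qed

lemma D_sequence_pos: "D_sequence b \<Longrightarrow> 0 < b n"
  unfolding D_sequence_def by blast

lemma D_sequence_dvd_mono:
  assumes "D_sequence b" "n \<le> m"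
  shows "b n dvd b m"
  using assms(2)
proof (induction m rule: dec_induct)
  case (step m)
  then show ?case using assms(1) dvd_trans unfolding D_sequence_def by blast
qed simp

lemma D_sequence_quotient:
  assumes "D_sequence b"
  obtains q where "b (Suc n) = b n * q" "2 \<le> q"
proof -
  obtain q where q: "b (Suc n) = b n * q"
    using assms unfolding D_sequence_def by (meson dvdE)
  have "q \<noteq> 0" using q D_sequence_pos[OF assms, of "Suc n"] by auto
  moreover have "q \<noteq> 1" using q assms unfolding D_sequence_def by (metis mult.right_neutral)
  ultimately have "2 \<le> q" by linarith
  with q show thesis by (rule that)
qed

lemma in_Tm_mono:
  assumes "1 \<le> m" "m \<le> m'" "in_Tm m' x"
  shows "in_Tm m x"
proof -
  have "1 / (4 * real m') \<le> 1 / (4 * real m)" using assms(1,2) by (simp add: frac_le)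
  then show ?thesis using assms(3) unfolding in_Tm_def by (meson order_trans)
qed

lemma in_Tm_add:
  assumes "1 \<le> m" "in_Tm (2 * m) x" "in_Tm (2 * m) y"
  shows "in_Tm m (x + y)"
proof -
  obtain z1 z2 :: int where "\<bar>x - z1\<bar> \<le> 1 / (4 * real (2 * m))" "\<bar>y - z2\<bar> \<le> 1 / (4 * real (2 * m))"
    using assms(2,3) unfolding in_Tm_def by blast
  moreover have "1 / (4 * real (2 * m)) + 1 / (4 * real (2 * m)) = 1 / (4 * real m)"
    using assms(1) by (simp add: field_simps)
  ultimately have "\<bar>(x + y) - of_int (z1 + z2)\<bar> \<le> 1 / (4 * real m)" by (simp add: abs_le_iff)
  then show ?thesis unfolding in_Tm_def by blast
qed

text \<open>If k/q lies in T_q then k is within 1/4 of a multiple of q, hence a multiple of q.\<close>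
lemma in_Tm_self_imp_dvd:
  assumes "0 < q" "in_Tm q (real_of_int k / real q)"
  shows "int q dvd k"
proof -
  obtain z :: int where z: "\<bar>real_of_int k / real q - z\<bar> \<le> 1 / (4 * real q)"
    using assms(2) unfolding in_Tm_def by blast
  have "real_of_int k / real q - z = real_of_int (k - z * int q) / real q"
    using assms(1) by (simp add: field_simps)
  with z assms(1) have "\<bar>real_of_int (k - z * int q)\<bar> \<le> 1 / 4"
    by (simp add: field_simps)
  then have "k = z * int q" by linarith
  then show ?thesis by simp
qed

text \<open>For q \<ge> 2, the fraction (q div 2)/q lies in [1/3, 1/2], at distance more than 1/4
  from every integer.\<close>
lemma half_fraction_not_in_T1:
  assumes "2 \<le> q"
  shows "\<not> in_Tm 1 (real_of_int (q div 2) / real_of_int q)"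
proof
  assume "in_Tm 1 (real_of_int (q div 2) / real_of_int q)"
  then obtain z :: int where z: "\<bar>real_of_int (q div 2) / q - z\<bar> \<le> 1 / 4"
    unfolding in_Tm_def by auto
  have "q \<le> 3 * (q div 2)" "2 * (q div 2) \<le> q" using assms by linarith+
  then have "real_of_int q \<le> 3 * real_of_int (q div 2)" "2 * real_of_int (q div 2) \<le> real_of_int q"
    by (metis of_int_le_iff of_int_mult of_int_numeral)+
  moreover have "0 < real_of_int q" using assms by simp
  ultimately have "1 / 3 \<le> real_of_int (q div 2) / q" "real_of_int (q div 2) / q \<le> 1 / 2"
    by (simp_all add: divide_simps)
  moreover have "z \<le> 0 \<or> 1 \<le> z" by linarith
  then have "real_of_int z \<le> 0 \<or> 1 \<le> real_of_int z" by auto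
  ultimately show False using z by linarith
qed

lemma zero_in_V_b: "0 \<in> V_b b m"
  unfolding V_b_def in_Tm_def by (auto intro: exI[of _ 0])

lemma V_b_antimono: "1 \<le> m \<Longrightarrow> m \<le> m' \<Longrightarrow> V_b b m' \<subseteq> V_b b m"
  using in_Tm_mono unfolding V_b_def by blast

lemma V_b_add: "1 \<le> m \<Longrightarrow> k \<in> V_b b (2 * m) \<Longrightarrow> l \<in> V_b b (2 * m) \<Longrightarrow> k + l \<in> V_b b m"
  using in_Tm_add unfolding V_b_def by (auto simp: add_divide_distrib)

lemma V_b_subset_multiples:
  assumes "D_sequence b" "k \<in> V_b b (b n)"
  shows "int (b n) dvd k"
  using assms in_Tm_self_imp_dvd D_sequence_pos unfolding V_b_def by blast

text \<open>No subgroup b_n Z is contained in V_{b,1}: already b_n (q div 2) is missing,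
  where b_{n+1} = b_n q.\<close>
lemma multiples_not_subset_V_b1:
  assumes "D_sequence b"
  shows "\<exists>j. int (b n) * j \<notin> V_b b 1"
proof -
  obtain q where q: "b (Suc n) = b n * q" "2 \<le> q" by (rule D_sequence_quotient[OF assms])
  have "real_of_int (int (b n) * (int q div 2)) / real (b (Suc n))
          = real_of_int (int q div 2) / real_of_int (int q)"
    using q D_sequence_pos[OF assms, of n] by simp
  then have "\<not> in_Tm 1 (real_of_int (int (b n) * (int q div 2)) / real (b (Suc n)))"
    using half_fraction_not_in_T1[of "int q"] q(2) by simp
  then show ?thesis unfolding V_b_def by blast
qed

lemma lambda_top_translation:
  "lambda_top b = topology (\<lambda>U. \<forall>x\<in>U. \<exists>n\<in>UNIV. (+) x ` range ((*) (int (b n))) \<subseteq> U)"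
proof -
  have "{x + int (b n) * k | k. True} = (+) x ` range ((*) (int (b n)))" for x n by auto
  then show ?thesis unfolding lambda_top_def by simp
qed

lemma tau_top_translation:
  "tau_top b = topology (\<lambda>U. \<forall>x\<in>U. \<exists>m\<in>{1..}. (+) x ` V_b b m \<subseteq> U)"
  unfolding tau_top_def Bex_def atLeast_iff ..

lemma lambda_directed:
  assumes "D_sequence b"
  shows "\<exists>k\<in>UNIV. range ((*) (int (b k))) \<subseteq> range ((*) (int (b i))) \<inter> range ((*) (int (b j)))"
proof -
  have "range ((*) (int (b (max i j)))) \<subseteq> range ((*) (int (b n)))" if le: "n \<le> max i j" for n
  proof -
    obtain c where "b (max i j) = b n * c" using D_sequence_dvd_mono[OF assms le] by blast
    then show ?thesis by (auto simp: mult.assoc)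
  qed
  then show ?thesis by (meson UNIV_I le_infI max.cobounded1 max.cobounded2)
qed

lemma tau_directed: "i \<in> {1..} \<Longrightarrow> j \<in> {1..} \<Longrightarrow> \<exists>k\<in>{1..}. V_b b k \<subseteq> V_b b i \<inter> V_b b j"
  using V_b_antimono by (intro bexI[of _ "max i j"]) auto

lemma openin_lambda_top:
  assumes "D_sequence b"
  shows "openin (lambda_top b) U \<longleftrightarrow> (\<forall>x\<in>U. \<exists>n. (+) x ` range ((*) (int (b n))) \<subseteq> U)"
  unfolding lambda_top_translation
  using openin_translation_topology[OF lambda_directed[OF assms]] by simp

lemma openin_tau_top: "openin (tau_top b) U \<longleftrightarrow> (\<forall>x\<in>U. \<exists>m\<ge>1. (+) x ` V_b b m \<subseteq> U)"
proof -
  have "openin (tau_top b) U \<longleftrightarrow> (\<forall>x\<in>U. \<exists>m\<in>{1..}. (+) x ` V_b b m \<subseteq> U)"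
    unfolding tau_top_translation by (rule openin_translation_topology[OF tau_directed])
  then show ?thesis unfolding Bex_def atLeast_iff .
qed

lemma topspace_lambda_top:
  assumes "D_sequence b"
  shows "topspace (lambda_top b) = UNIV"
  unfolding lambda_top_translation
  by (rule topspace_translation_topology[OF lambda_directed[OF assms]]) simp

lemma topspace_tau_top: "topspace (tau_top b) = UNIV"
  unfolding tau_top_translation
  by (rule topspace_translation_topology[OF tau_directed]) auto

text \<open>tau_b is finer than lambda_b: each basic set x + b_n Z contains x + V_{b,b_n}.\<close>
lemma lambda_open_imp_tau_open:
  assumes "D_sequence b" "openin (lambda_top b) U"
  shows "openin (tau_top b) U"
  unfolding openin_tau_top
proof
  fix x assume "x \<in> U"
  then obtain n where n: "(+) x ` range ((*) (int (b n))) \<subseteq> U"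
    using assms openin_lambda_top by blast
  have "V_b b (b n) \<subseteq> range ((*) (int (b n)))"
    using V_b_subset_multiples[OF assms(1)] by (fastforce elim!: dvdE)
  then have "(+) x ` V_b b (b n) \<subseteq> U" using n by blast
  moreover have "1 \<le> b n" using D_sequence_pos[OF assms(1)] by (simp add: Suc_le_eq)
  ultimately show "\<exists>m\<ge>1. (+) x ` V_b b m \<subseteq> U" by blast
qed

text \<open>The points having a basic tau_b-neighbourhood inside V_{b,1}; this set is tau_b-open
  because V_{b,2m} + V_{b,2m} \<subseteq> V_{b,m}.\<close>
definition tau_core :: "(nat \<Rightarrow> nat) \<Rightarrow> int set" where
  "tau_core b = {x. \<exists>m\<ge>1. (+) x ` V_b b m \<subseteq> V_b b 1}"

lemma tau_core_open: "openin (tau_top b) (tau_core b)"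
  unfolding openin_tau_top
proof
  fix x assume "x \<in> tau_core b"
  then obtain m where m: "1 \<le> m" "(+) x ` V_b b m \<subseteq> V_b b 1" unfolding tau_core_def by blast
  have "y \<in> tau_core b" if y: "y \<in> (+) x ` V_b b (2 * m)" for y
  proof -
    obtain k where k: "k \<in> V_b b (2 * m)" "y = x + k" using y by blast
    have "x + (k + l) \<in> V_b b 1" if "l \<in> V_b b (2 * m)" for l
      using m V_b_add[OF m(1) k(1) that] by blast
    then have "(+) y ` V_b b (2 * m) \<subseteq> V_b b 1" using k(2) by (auto simp: add.assoc)
    then show ?thesis unfolding tau_core_def using m(1) by (intro CollectI exI[of _ "2 * m"]) auto
  qed
  then show "\<exists>m'\<ge>1. (+) x ` V_b b m' \<subseteq> tau_core b" using m(1) by (intro exI[of _ "2 * m"]) auto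
qed

lemma tau_core_zero: "0 \<in> tau_core b"
  unfolding tau_core_def by (auto intro!: exI[of _ 1])

lemma tau_core_subset: "tau_core b \<subseteq> V_b b 1"
  unfolding tau_core_def using zero_in_V_b by fastforce

lemma tau_core_not_lambda_open:
  assumes "D_sequence b"
  shows "\<not> openin (lambda_top b) (tau_core b)"
proof
  assume "openin (lambda_top b) (tau_core b)"
  then obtain n where "range ((*) (int (b n))) \<subseteq> tau_core b"
    using openin_lambda_top[OF assms] tau_core_zero by fastforce
  then show False using multiples_not_subset_V_b1[OF assms, of n] tau_core_subset by blast
qed

theorem proposition3p7:
  fixes b :: "nat \<Rightarrow> nat"
  assumes "D_sequence b"
  shows "(\<forall>U. openin (lambda_top b) U \<longrightarrow> openin (tau_top b) U)
         \<and> tau_top b \<noteq> lambda_top b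
         \<and> continuous_map (tau_top b) (lambda_top b) id
         \<and> \<not> homeomorphic_map (tau_top b) (lambda_top b) id"
proof -
  have finer: "\<forall>U. openin (lambda_top b) U \<longrightarrow> openin (tau_top b) U"
    using lambda_open_imp_tau_open[OF assms] by blast
  have different: "tau_top b \<noteq> lambda_top b"
    using tau_core_open tau_core_not_lambda_open[OF assms] by metis
  moreover have "continuous_map (tau_top b) (lambda_top b) id"
    unfolding continuous_map topspace_lambda_top[OF assms] topspace_tau_top using finer by simp
  moreover have "\<not> homeomorphic_map (tau_top b) (lambda_top b) id"
    using different homeomorphic_map_id by metis
  ultimately show ?thesis using finer by blast
qed

end
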